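(* Let $D$ be a data set, $\mathcal{I}$ a finite index set, and for each $i\in\mathcal{I}$ let $D_{P_i}\subseteq D$ (population subset) and $D_{G_i}\subseteq D_{P_i}$ (group subset) be given. Let $h(z)$ be a real-valued function of a data point, and write $\mu(S)=\frac{1}{|S|}\sum_{z\in S}h(z)$. For $C_d>0$ let $\bar\mu^{C_d}(D_{G_i})=\frac{1}{|D_{G_i}|}\sum_{z\in D_{G_i}}\frac{h(z)}{\max(1,|h(z)|/C_d)}$. For $i\in\mathcal{I}$ let $V_i=|\mu(D_{P_i})-\mu(D_{G_i})|$ and $$\tilde V_i=|\mu(D_{P_i})-\bar\mu^{C_d}(D_{G_i})|+\mathcal{N}(0,\sigma_d^2\Delta_d^2),$$ where $\sigma_d>0$ and $\Delta_d=\frac{\sqrt2\,C_d}{\min_{j\in\mathcal{I}}|D_{G_j}|-1}$. Then for every $i\in\mathcal{I}$, $$\mathbb{E}\big[|V_i-\tilde V_i|\big]\le\frac{\sqrt2\,C_d\,\sigma_d}{\min_{j\in\mathcal{I}}|D_{G_j}|-1}+\frac{1}{|D_{G_i}|}\sum_{z\in D_{G_i}}\max\big(0,|h(z)|-C_d\big).$$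
   Context: The expectation is over the Gaussian noise. $V_i$ is the violation of the fairness constraint $\mu(D_{P_i})=\mu(D_{G_i})$ and $\tilde V_i$ its privacy-preserving (clipped and noised) version used in the dual update of the PF-LD algorithm. *)

theory Defs
  imports "HOL-Probability.Probability"
begin

definition mean :: "('a \<Rightarrow> real) \<Rightarrow> 'a set \<Rightarrow> real" where
  "mean h S = (\<Sum>z\<in>S. h z) / real (card S)"

definition clipped_mean :: "real \<Rightarrow> ('a \<Rightarrow> real) \<Rightarrow> 'a set \<Rightarrow> real" where
  "clipped_mean C h S = (\<Sum>z\<in>S. h z / max 1 (\<bar>h z\<bar> / C)) / real (card S)"

definition viol :: "('a \<Rightarrow> real) \<Rightarrow> 'a set \<Rightarrow> 'a set \<Rightarrow> real" where
  "viol h P G = \<bar>mean h P - mean h G\<bar>"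

definition viol_clip_nonoise :: "real \<Rightarrow> ('a \<Rightarrow> real) \<Rightarrow> 'a set \<Rightarrow> 'a set \<Rightarrow> real" where
  "viol_clip_nonoise C h P G = \<bar>mean h P - clipped_mean C h G\<bar>"

definition sens :: "real \<Rightarrow> 'i set \<Rightarrow> ('i \<Rightarrow> 'a set) \<Rightarrow> real" where
  "sens C I G = sqrt 2 * C / (real (Min ((\<lambda>j. card (G j)) ` I)) - 1)"

end

theory Submission
  imports Defs
begin

text \<open>The noise contributes its mean absolute value \<open>\<sigma>\<^sub>d \<Delta>\<^sub>d sqrt (2/pi) \<le> \<sigma>\<^sub>d \<Delta>\<^sub>d\<close>;
  the rest is clipping bias. By the reverse triangle inequality the two violations differ by at
  most the gap between the plain and the clipped mean over \<open>D\<^sub>G\<^sub>i\<close>, and clipping moves each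
  value \<open>h z\<close> by exactly \<open>max 0 (|h z| - C\<^sub>d)\<close>.\<close>

lemma abs_sub_clip_eq:
  fixes C y :: real
  assumes "C > 0"
  shows "\<bar>y - y / max 1 (\<bar>y\<bar> / C)\<bar> = max 0 (\<bar>y\<bar> - C)"
proof (cases "\<bar>y\<bar> \<le> C")
  case True
  then have "\<bar>y\<bar> / C \<le> 1" using assms by (simp add: divide_le_eq)
  with True show ?thesis by simp
next
  case False
  then have "max 1 (\<bar>y\<bar> / C) = \<bar>y\<bar> / C" using assms by (simp add: le_divide_eq)
  moreover have "y / (\<bar>y\<bar> / C) = sgn y * C"
    using False assms by (auto simp: field_simps sgn_if)
  ultimately show ?thesis using False assms by (auto simp: sgn_if)
qed

lemma abs_mean_minus_clipped_mean_le:
  fixes h :: "'a \<Rightarrow> real" and C :: real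
  assumes "C > 0"
  shows "\<bar>mean h S - clipped_mean C h S\<bar>
         \<le> (\<Sum>z\<in>S. max 0 (\<bar>h z\<bar> - C)) / real (card S)"
proof -
  have "\<bar>mean h S - clipped_mean C h S\<bar>
        = \<bar>\<Sum>z\<in>S. h z - h z / max 1 (\<bar>h z\<bar> / C)\<bar> / real (card S)"
    unfolding mean_def clipped_mean_def
    by (simp add: sum_subtractf abs_divide flip: diff_divide_distrib)
  also have "\<dots> \<le> (\<Sum>z\<in>S. \<bar>h z - h z / max 1 (\<bar>h z\<bar> / C)\<bar>) / real (card S)"
    by (intro divide_right_mono sum_abs) auto
  also have "\<dots> = (\<Sum>z\<in>S. max 0 (\<bar>h z\<bar> - C)) / real (card S)"
    using abs_sub_clip_eq[OF assms] by simp
  finally show ?thesis .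
qed

lemma abs_viol_minus_viol_clip_le:
  "\<bar>viol h P G - viol_clip_nonoise C h P G\<bar> \<le> \<bar>mean h G - clipped_mean C h G\<bar>"
  unfolding viol_def viol_clip_nonoise_def by linarith

lemma normal_density_abs_shift_integral_le:
  fixes a s :: real
  assumes "s > 0"
  shows "(LINT x|lborel. normal_density 0 s x * \<bar>a - x\<bar>) \<le> \<bar>a\<bar> + s * sqrt (2 / pi)"
proof -
  let ?n = "normal_density 0 s"
  have int_const: "integrable lborel (\<lambda>x. ?n x * \<bar>a\<bar>)"
    using integrable_normal_density[OF assms] by (rule integrable_mult_left)
  have int_abs: "integrable lborel (\<lambda>x. ?n x * \<bar>x\<bar>)"
    using integrable_normal_moment_abs[OF assms, where \<mu>=0 and k=1] by simp
  have "integrable lborel (\<lambda>x. \<bar>?n x * a - ?n x * x\<bar>)"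
    using integrable_normal_moment_nz_1[OF assms, where \<mu>=0] integrable_normal_density[OF assms]
    by (intro integrable_abs integrable_diff integrable_mult_left) auto
  moreover have "(\<lambda>x. \<bar>?n x * a - ?n x * x\<bar>) = (\<lambda>x. ?n x * \<bar>a - x\<bar>)"
    by (simp add: abs_mult right_diff_distrib[symmetric])
  ultimately have int_shift: "integrable lborel (\<lambda>x. ?n x * \<bar>a - x\<bar>)"
    by simp
  have "(LINT x|lborel. ?n x * \<bar>a - x\<bar>) \<le> (LINT x|lborel. ?n x * \<bar>a\<bar> + ?n x * \<bar>x\<bar>)"
  proof (rule integral_mono)
    show "integrable lborel (\<lambda>x. ?n x * \<bar>a\<bar> + ?n x * \<bar>x\<bar>)"
      using int_const int_abs by (rule Bochner_Integration.integrable_add)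
    show "?n x * \<bar>a - x\<bar> \<le> ?n x * \<bar>a\<bar> + ?n x * \<bar>x\<bar>" for x
      by (simp flip: distrib_left add: mult_left_mono abs_triangle_ineq4)
  qed (fact int_shift)
  also have "\<dots> = \<bar>a\<bar> + (LINT x|lborel. ?n x * \<bar>x\<bar>)"
    using int_const int_abs integral_normal_density[OF assms] by simp
  also have "(LINT x|lborel. ?n x * \<bar>x\<bar>) = s * sqrt (2 / pi)"
    using integral_normal_moment_abs_odd[OF assms, where \<mu>=0 and k=0] by simp
  finally show ?thesis .
qed

theorem theorem7:
  fixes D :: "'a set" and I :: "'i set" and P G :: "'i \<Rightarrow> 'a set"
    and h :: "'a \<Rightarrow> real" and C\<^sub>d \<sigma>\<^sub>d :: real and i :: 'i
  assumes "finite D" and "finite I" and "i \<in> I"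
    and "\<And>j. j \<in> I \<Longrightarrow> P j \<subseteq> D"
    and "\<And>j. j \<in> I \<Longrightarrow> G j \<subseteq> P j"
    and "\<And>j. j \<in> I \<Longrightarrow> card (G j) \<ge> 2"
    and "C\<^sub>d > 0" and "\<sigma>\<^sub>d > 0"
  shows "(LINT x|lborel. normal_density 0 (\<sigma>\<^sub>d * sens C\<^sub>d I G) x *
            \<bar>viol h (P i) (G i) - (viol_clip_nonoise C\<^sub>d h (P i) (G i) + x)\<bar>)
         \<le> sqrt 2 * C\<^sub>d * \<sigma>\<^sub>d / (real (Min ((\<lambda>j. card (G j)) ` I)) - 1)
           + (\<Sum>z\<in>G i. max 0 (\<bar>h z\<bar> - C\<^sub>d)) / real (card (G i))"
proof -
  define s where "s = \<sigma>\<^sub>d * sens C\<^sub>d I G"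
  define a where "a = viol h (P i) (G i) - viol_clip_nonoise C\<^sub>d h (P i) (G i)"
  have "Min ((\<lambda>j. card (G j)) ` I) \<in> (\<lambda>j. card (G j)) ` I"
    using assms(2,3) by (intro Min_in) auto
  then have "Min ((\<lambda>j. card (G j)) ` I) \<ge> 2" using assms(6) by auto
  then have s_pos: "s > 0" and s_eq: "s = sqrt 2 * C\<^sub>d * \<sigma>\<^sub>d / (real (Min ((\<lambda>j. card (G j)) ` I)) - 1)"
    using assms(7,8) by (auto simp: s_def sens_def)
  have "(LINT x|lborel. normal_density 0 s x *
          \<bar>viol h (P i) (G i) - (viol_clip_nonoise C\<^sub>d h (P i) (G i) + x)\<bar>)
        = (LINT x|lborel. normal_density 0 s x * \<bar>a - x\<bar>)"
    by (simp add: a_def algebra_simps)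
  also have "\<dots> \<le> \<bar>a\<bar> + s * sqrt (2 / pi)"
    using s_pos by (rule normal_density_abs_shift_integral_le)
  also have "s * sqrt (2 / pi) \<le> s"
    using s_pos pi_gt3 by (simp add: mult_left_le)
  also have "\<bar>a\<bar> \<le> (\<Sum>z\<in>G i. max 0 (\<bar>h z\<bar> - C\<^sub>d)) / real (card (G i))"
    unfolding a_def
    using abs_viol_minus_viol_clip_le abs_mean_minus_clipped_mean_le[OF assms(7)]
    by (rule order_trans)
  finally show ?thesis
    unfolding s_def[symmetric] s_eq by simp
qed

end
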